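(* The tag–options lattice $TO$ (defined below) is a complete lattice.
   Context: $T$ is a set of tags and $O$ a set of options. The tag lattice is the dual of the powerset lattice of $T$: its elements are subsets of $T$, ordered by $A \sqsubseteq B$ iff $A \supseteq B$, with meet given by union and join by intersection. For $T' \subseteq T$, the options lattice $O_{T'}$ consists of all functions $f : T' \to \mathcal{P}(O)$, ordered pointwise by inclusion, with meet the pointwise intersection and join the pointwise union. For $A,B \subseteq T$, define $\phi_{A\to B} : O_A \to O_B$ by $\phi_{A\to B}(f)(t) = f(t)$ if $t\in A\cap B$ and $=O$ if $t\in B\setminus A$. The tag–options lattice $TO$ has elements the pairs $(T', f)$ with $T' \subseteq T$ and $f \in O_{T'}$, ordered by $(A,f) \sqsubseteq (B,g)$ iff $A \supseteq B$ and $\phi_{A\to B}(f) \sqsubseteq g$ in $O_B$. For $\Lambda \subseteq TO$ with $V = \{T' \mid (T',f)\in\Lambda\}$, the join is $(\bigcap V, \bigvee\{\phi_{T'\to \bigcap V}(f) \mid (T',f)\in\Lambda\})$ and the meet is $(\bigcup V, \bigwedge\{\phi_{T'\to\bigcup V}(f) \mid (T',f)\in\Lambda\})$, where $\bigvee,\bigwedge$ denote join and meet in the corresponding options lattice. *)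

theory Defs
  imports "HOL-Algebra.Complete_Lattice"
begin

text \<open>Options lattice O_{T'}: functions T' -> P(Opt). A function on T' is represented
  canonically as a total function that is empty outside T'.\<close>
definition opts :: "'o set \<Rightarrow> 't set \<Rightarrow> ('t \<Rightarrow> 'o set) set" where
  "opts Opt A = {f. (\<forall>t\<in>A. f t \<subseteq> Opt) \<and> (\<forall>t. t \<notin> A \<longrightarrow> f t = {})}"

definition phi :: "'o set \<Rightarrow> 't set \<Rightarrow> 't set \<Rightarrow> ('t \<Rightarrow> 'o set) \<Rightarrow> ('t \<Rightarrow> 'o set)" where
  "phi Opt A B f = (\<lambda>t. if t \<in> A \<inter> B then f t else if t \<in> B - A then Opt else {})"

definition TO_carrier :: "'t set \<Rightarrow> 'o set \<Rightarrow> ('t set \<times> ('t \<Rightarrow> 'o set)) set" where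
  "TO_carrier T Opt = {(A, f). A \<subseteq> T \<and> f \<in> opts Opt A}"

definition TO_le :: "'o set \<Rightarrow> ('t set \<times> ('t \<Rightarrow> 'o set)) \<Rightarrow> ('t set \<times> ('t \<Rightarrow> 'o set)) \<Rightarrow> bool" where
  "TO_le Opt x y = (case x of (A, f) \<Rightarrow> case y of (B, g) \<Rightarrow>
      B \<subseteq> A \<and> (\<forall>t\<in>B. phi Opt A B f t \<subseteq> g t))"

definition TO :: "'t set \<Rightarrow> 'o set \<Rightarrow> ('t set \<times> ('t \<Rightarrow> 'o set)) gorder" where
  "TO T Opt = \<lparr> carrier = TO_carrier T Opt, eq = (=), le = TO_le Opt \<rparr>"

end

theory Submission
  imports Defs
begin

text \<open>Joins and meets are computed componentwise, exactly as in the paper: the join of a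
  family takes the intersection of the tag sets and the union of the options, the meet takes
  the union of the tag sets and the intersection of the options transported by \<open>phi\<close>.
  Transport fills a tag missing from the source with the full option set \<open>Opt\<close>, the neutral
  element of the intersection, so a tag absent from some member does not constrain the meet.\<close>

text \<open>The factor \<open>T\<close> in \<open>TO_Sup\<close> and the guard in \<open>TO_Inf\<close> only matter for the empty family,
  whose intersections are \<open>UNIV\<close>.\<close>

definition TO_Sup :: "'t set \<Rightarrow> 'o set \<Rightarrow> ('t set \<times> ('t \<Rightarrow> 'o set)) set
    \<Rightarrow> 't set \<times> ('t \<Rightarrow> 'o set)" where
  "TO_Sup T Opt S =
    (let A = T \<inter> \<Inter>(fst ` S) in (A, \<lambda>t. \<Union>x\<in>S. phi Opt (fst x) A (snd x) t))"

definition TO_Inf :: "'t set \<Rightarrow> 'o set \<Rightarrow> ('t set \<times> ('t \<Rightarrow> 'o set)) set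
    \<Rightarrow> 't set \<times> ('t \<Rightarrow> 'o set)" where
  "TO_Inf T Opt S =
    (let A = \<Union>(fst ` S) in (A, \<lambda>t. if t \<in> A then (\<Inter>x\<in>S. phi Opt (fst x) A (snd x) t) else {}))"

lemma phi_apply_common: "t \<in> A \<Longrightarrow> t \<in> B \<Longrightarrow> phi Opt A B f t = f t"
  by (simp add: phi_def)

lemma phi_apply_new: "t \<notin> A \<Longrightarrow> t \<in> B \<Longrightarrow> phi Opt A B f t = Opt"
  by (simp add: phi_def)

lemma phi_apply_outside: "t \<notin> B \<Longrightarrow> phi Opt A B f t = {}"
  by (simp add: phi_def)

lemma carrier_TO_iff:
  "(A, f) \<in> carrier (TO T Opt) \<longleftrightarrow>
     A \<subseteq> T \<and> (\<forall>t\<in>A. f t \<subseteq> Opt) \<and> (\<forall>t. t \<notin> A \<longrightarrow> f t = {})"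
  by (simp add: TO_def TO_carrier_def opts_def)

lemma phi_subset_Opt: "x \<in> carrier (TO T Opt) \<Longrightarrow> phi Opt (fst x) B (snd x) t \<subseteq> Opt"
  by (cases x) (auto simp: phi_def carrier_TO_iff)

lemma le_TO_iff:
  "(A, f) \<sqsubseteq>\<^bsub>TO T Opt\<^esub> (B, g) \<longleftrightarrow> B \<subseteq> A \<and> (\<forall>t\<in>B. f t \<subseteq> g t)"
  by (auto simp: TO_def TO_le_def phi_def)

lemma eq_TO_iff: "x .=\<^bsub>TO T Opt\<^esub> y \<longleftrightarrow> x = y"
  by (simp add: TO_def)

lemma partial_order_TO: "partial_order (TO T Opt)"
proof
  fix x y z
  show "x \<sqsubseteq>\<^bsub>TO T Opt\<^esub> x"
    by (cases x) (simp add: le_TO_iff)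
  show "x \<sqsubseteq>\<^bsub>TO T Opt\<^esub> y \<Longrightarrow> y \<sqsubseteq>\<^bsub>TO T Opt\<^esub> z \<Longrightarrow> x \<sqsubseteq>\<^bsub>TO T Opt\<^esub> z"
    by (cases x; cases y; cases z) (simp add: le_TO_iff, blast)
  show "x \<sqsubseteq>\<^bsub>TO T Opt\<^esub> y \<Longrightarrow> y \<sqsubseteq>\<^bsub>TO T Opt\<^esub> x \<Longrightarrow> x \<in> carrier (TO T Opt)
      \<Longrightarrow> y \<in> carrier (TO T Opt) \<Longrightarrow> x .=\<^bsub>TO T Opt\<^esub> y"
    by (cases x; cases y) (auto simp: eq_TO_iff le_TO_iff carrier_TO_iff fun_eq_iff)
qed (simp_all add: TO_def)

lemma TO_Sup_in_carrier:
  assumes "S \<subseteq> carrier (TO T Opt)"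
  shows "TO_Sup T Opt S \<in> carrier (TO T Opt)"
  unfolding TO_Sup_def Let_def carrier_TO_iff
proof (intro conjI ballI allI impI)
  fix t
  show "(\<Union>x\<in>S. phi Opt (fst x) (T \<inter> \<Inter>(fst ` S)) (snd x) t) \<subseteq> Opt"
    using assms by (auto intro: phi_subset_Opt[THEN subsetD])
  show "t \<notin> T \<inter> \<Inter>(fst ` S) \<Longrightarrow> (\<Union>x\<in>S. phi Opt (fst x) (T \<inter> \<Inter>(fst ` S)) (snd x) t) = {}"
    by (auto simp: phi_apply_outside)
qed auto

lemma TO_Inf_in_carrier:
  assumes "S \<subseteq> carrier (TO T Opt)"
  shows "TO_Inf T Opt S \<in> carrier (TO T Opt)"
  unfolding TO_Inf_def Let_def carrier_TO_iff
proof (intro conjI ballI allI impI)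
  show "\<Union>(fst ` S) \<subseteq> T"
    using assms by (force simp: carrier_TO_iff)
  fix t
  assume "t \<in> \<Union>(fst ` S)"
  then show "(if t \<in> \<Union>(fst ` S) then (\<Inter>x\<in>S. phi Opt (fst x) (\<Union>(fst ` S)) (snd x) t) else {}) \<subseteq> Opt"
    using assms by (auto intro: phi_subset_Opt[THEN subsetD])
qed simp

lemma least_TO_Sup:
  assumes S: "S \<subseteq> carrier (TO T Opt)"
  shows "least (TO T Opt) (TO_Sup T Opt S) (Upper (TO T Opt) S)"
proof (rule least_UpperI[OF _ _ S TO_Sup_in_carrier[OF S]])
  fix x
  assume "x \<in> S"
  then show "x \<sqsubseteq>\<^bsub>TO T Opt\<^esub> TO_Sup T Opt S"
    by (cases x) (auto simp: TO_Sup_def le_TO_iff phi_def)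
next
  fix y
  assume y: "y \<in> Upper (TO T Opt) S"
  obtain C h where y_eq: "y = (C, h)" by fastforce
  define A where "A = T \<inter> \<Inter>(fst ` S)"
  have bound: "C \<subseteq> fst x \<and> (\<forall>t\<in>C. snd x t \<subseteq> h t)" if "x \<in> S" for x
    using Upper_memD[OF y that S] by (cases x) (simp add: y_eq le_TO_iff)
  have "(C, h) \<in> carrier (TO T Opt)"
    using subsetD[OF Upper_closed y] by (simp add: y_eq)
  with bound have "C \<subseteq> A"
    by (auto simp: A_def carrier_TO_iff)
  moreover have "phi Opt (fst x) A (snd x) t \<subseteq> h t" if "t \<in> C" "x \<in> S" for t x
  proof -
    have "phi Opt (fst x) A (snd x) t = snd x t"
      using that bound[OF that(2)] \<open>C \<subseteq> A\<close> by (intro phi_apply_common) auto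
    with bound that show ?thesis by simp
  qed
  ultimately show "TO_Sup T Opt S \<sqsubseteq>\<^bsub>TO T Opt\<^esub> y"
    unfolding TO_Sup_def Let_def A_def[symmetric] y_eq le_TO_iff by (simp add: UN_subset_iff)
qed

lemma greatest_TO_Inf:
  assumes S: "S \<subseteq> carrier (TO T Opt)"
  shows "greatest (TO T Opt) (TO_Inf T Opt S) (Lower (TO T Opt) S)"
proof (rule greatest_LowerI[OF _ _ S TO_Inf_in_carrier[OF S]])
  fix x
  assume x: "x \<in> S"
  define A where "A = \<Union>(fst ` S)"
  have "fst x \<subseteq> A"
    using x by (auto simp: A_def)
  moreover have "(\<Inter>y\<in>S. phi Opt (fst y) A (snd y) t) \<subseteq> snd x t" if "t \<in> fst x" for t
  proof -
    have "(\<Inter>y\<in>S. phi Opt (fst y) A (snd y) t) \<subseteq> phi Opt (fst x) A (snd x) t"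
      using x by (rule INT_lower)
    also have "\<dots> = snd x t"
      using \<open>fst x \<subseteq> A\<close> that by (intro phi_apply_common) auto
    finally show ?thesis .
  qed
  ultimately show "TO_Inf T Opt S \<sqsubseteq>\<^bsub>TO T Opt\<^esub> x"
    unfolding TO_Inf_def Let_def A_def[symmetric] by (cases x) (simp add: le_TO_iff subset_iff)
next
  fix y
  assume y: "y \<in> Lower (TO T Opt) S"
  obtain C h where y_eq: "y = (C, h)" by fastforce
  define A where "A = \<Union>(fst ` S)"
  have bound: "fst x \<subseteq> C \<and> (\<forall>t\<in>fst x. h t \<subseteq> snd x t)" if "x \<in> S" for x
    using Lower_memD[OF y that S] by (cases x) (simp add: y_eq le_TO_iff)
  then have "A \<subseteq> C"
    by (auto simp: A_def)
  have h_Opt: "h t \<subseteq> Opt" if "t \<in> C" for t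
    using subsetD[OF Lower_closed y] that by (simp add: y_eq carrier_TO_iff)
  have "h t \<subseteq> phi Opt (fst x) A (snd x) t" if "t \<in> A" "x \<in> S" for t x
  proof (cases "t \<in> fst x")
    case True
    then show ?thesis
      using that bound[OF that(2)] by (simp add: phi_apply_common)
  next
    case False
    then show ?thesis
      using that h_Opt \<open>A \<subseteq> C\<close> by (auto simp: phi_apply_new)
  qed
  with \<open>A \<subseteq> C\<close> show "y \<sqsubseteq>\<^bsub>TO T Opt\<^esub> TO_Inf T Opt S"
    unfolding TO_Inf_def Let_def A_def[symmetric] y_eq le_TO_iff by (simp add: INT_greatest)
qed

theorem theorem6:
  fixes T :: "'t set" and Opt :: "'o set"
  shows "complete_lattice (TO T Opt)"
proof (rule partial_order.complete_latticeI[OF partial_order_TO])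
  fix S
  assume "S \<subseteq> carrier (TO T Opt)"
  then show "\<exists>s. least (TO T Opt) s (Upper (TO T Opt) S)"
    using least_TO_Sup by blast
next
  fix S
  assume "S \<subseteq> carrier (TO T Opt)"
  then show "\<exists>i. greatest (TO T Opt) i (Lower (TO T Opt) S)"
    using greatest_TO_Inf by blast
qed

end
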